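(* Let $v$ be a word with distinct entries, $P\in\mathrm{MRPD}(v)$, and let pipes $j\neq j'$ both be removable in $P$. Then pipe $j'$ is removable in $\Phi_j(P)$, and $\Phi_{j'}(\Phi_j(P))=\Phi_j(\Phi_{j'}(P))$.
   Context: Let $v=v_1\cdots v_m$ be a word of distinct positive integers with sorted entries $a_1<\dots<a_m$. A pipe dream for $v$ fills the staircase $\{(i,k):i,k\ge1,\ i+k\le m+1\}$ (row $i$ from the top, column $k$ from the left) with crossing tiles and bumping tiles (an upper-left arc joining top and left edges, a lower-right arc joining bottom and right edges), every tile $(i,m+1-i)$ being a bumping tile. Pipe $a_k$ enters at the top of column $k$ and travels down/left to the left boundary. It is reduced if any two pipes cross at most once and the pipe exiting row $i$ is labelled $v_i$. A marked reduced pipe dream of $v$ is a reduced pipe dream with a set of marked bumping tiles, where a bumping tile in row $i$ may be marked only if the two pipes through it cross at a crossing tile in a row strictly above $i$; $\mathrm{MRPD}(v)$ is the set of these. Pipe $j$ (entering at column $C_j$) is removable if: (i) column $C_j$ consists, top to bottom, of crossing tiles all traversed by pipe $j$, followed only by unmarked bumping tiles; (ii) for each crossing tile traversed by pipe $j$, the tile directly above it (if any) is not an unmarked bumping tile; (iii) pipe $j$ traverses no marked bumping tile. For removable $j$, in each column $c<C_j$ pipe $j$ traverses either one crossing tile horizontally or two vertically adjacent unmarked bumping tiles $(r,c),(r+1,c)$ (entering $(r,c)$ from the right via its lower-right arc, leaving $(r+1,c)$ leftward via its upper-left arc). $\Phi_j(P)\in\mathrm{MRPD}(v\setminus j)$ is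 obtained by: deleting column $C_j$; in each column $c<C_j$ deleting that crossing tile, or deleting the lower-right half of $(r,c)$ and the upper-left half of $(r+1,c)$; then shifting all tiles right of $C_j$ one unit left and, in columns $c<C_j$, all tiles and half-tiles below pipe $j$ one unit up (the two remaining halves forming one unmarked bumping tile), keeping other tiles and markings. *)

theory Defs
  imports Main
begin

text \<open>Tiles: position (i,k) = (row from top, column from left), both starting at 1.
  A tile function T gives True for a crossing tile and False for a bumping tile.
  A marked pipe dream is a pair (T, M) with M the set of marked tiles.\<close>

type_synonym tiles = "nat \<Rightarrow> nat \<Rightarrow> bool"
type_synonym mpd = "tiles \<times> (nat \<times> nat) set"

datatype dir = FromTop | FromRight

definition in_stair :: "nat \<Rightarrow> nat \<times> nat \<Rightarrow> bool" where
  "in_stair m p \<longleftrightarrow> 1 \<le> fst p \<and> 1 \<le> snd p \<and> fst p + snd p \<le> m + 1"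

definition pipe_dream :: "nat \<Rightarrow> tiles \<Rightarrow> bool" where
  "pipe_dream m T \<longleftrightarrow> (\<forall>i k. T i k \<longrightarrow> in_stair m (i, k))
     \<and> (\<forall>i. 1 \<le> i \<and> i \<le> m \<longrightarrow> \<not> T i (m + 1 - i))"

text \<open>One step of a pipe: state = (tile entered, side it was entered from).
  Column 0 means the pipe has left through the left boundary.\<close>
fun step :: "tiles \<Rightarrow> (nat \<times> nat) \<times> dir \<Rightarrow> (nat \<times> nat) \<times> dir" where
  "step T ((r, c), d) =
     (if c = 0 then ((r, c), d) else
      (case d of
         FromTop \<Rightarrow> (if T r c then ((r + 1, c), FromTop) else ((r, c - 1), FromRight))
       | FromRight \<Rightarrow> (if T r c then ((r, c - 1), FromRight) else ((r + 1, c), FromTop))))"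

definition pipe_state :: "tiles \<Rightarrow> nat \<Rightarrow> nat \<Rightarrow> (nat \<times> nat) \<times> dir" where
  "pipe_state T k n = (step T ^^ n) ((1, k), FromTop)"

text \<open>Tiles visited (with entry side) by the pipe entering at the top of column k.
  Each step increases the row or decreases the column, so 2m steps suffice.\<close>
definition visits :: "nat \<Rightarrow> tiles \<Rightarrow> nat \<Rightarrow> ((nat \<times> nat) \<times> dir) set" where
  "visits m T k = {s. \<exists>n \<le> 2 * m. s = pipe_state T k n \<and> 1 \<le> snd (fst s)}"

definition traverses :: "nat \<Rightarrow> tiles \<Rightarrow> nat \<Rightarrow> nat \<times> nat \<Rightarrow> bool" where
  "traverses m T k p \<longleftrightarrow> (\<exists>d. (p, d) \<in> visits m T k)"

definition exit_row :: "nat \<Rightarrow> tiles \<Rightarrow> nat \<Rightarrow> nat" where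
  "exit_row m T k = fst (fst (pipe_state T k (2 * m)))"

definition cross_tiles :: "nat \<Rightarrow> tiles \<Rightarrow> nat \<Rightarrow> nat \<Rightarrow> (nat \<times> nat) set" where
  "cross_tiles m T k k' = {p. T (fst p) (snd p) \<and> traverses m T k p \<and> traverses m T k' p}"

text \<open>Label of the pipe entering column k: the k-th smallest entry of v;
  column of the pipe labelled j.\<close>
definition label :: "nat list \<Rightarrow> nat \<Rightarrow> nat" where
  "label v k = sort v ! (k - 1)"

definition col :: "nat list \<Rightarrow> nat \<Rightarrow> nat" where
  "col v j = (THE k. 1 \<le> k \<and> k \<le> length v \<and> label v k = j)"

definition reduced :: "nat list \<Rightarrow> tiles \<Rightarrow> bool" where
  "reduced v T \<longleftrightarrow> pipe_dream (length v) T
     \<and> (\<forall>k k'. k \<in> {1..length v} \<and> k' \<in> {1..length v} \<and> k \<noteq> k'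
           \<longrightarrow> card (cross_tiles (length v) T k k') \<le> 1)
     \<and> (\<forall>k \<in> {1..length v}. 1 \<le> exit_row (length v) T k \<and> exit_row (length v) T k \<le> length v
           \<and> v ! (exit_row (length v) T k - 1) = label v k)"

definition MRPD :: "nat list \<Rightarrow> mpd set" where
  "MRPD v = {(T, M). reduced v T \<and>
     (\<forall>p \<in> M. in_stair (length v) p \<and> \<not> T (fst p) (snd p) \<and>
        (\<exists>k k'. k \<in> {1..length v} \<and> k' \<in> {1..length v} \<and> k \<noteq> k'
           \<and> traverses (length v) T k p \<and> traverses (length v) T k' p
           \<and> (\<exists>q \<in> cross_tiles (length v) T k k'. fst q < fst p)))}"

definition removable :: "nat list \<Rightarrow> mpd \<Rightarrow> nat \<Rightarrow> bool" where
  "removable v P j \<longleftrightarrow> j \<in> set v \<and>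
     (let m = length v; T = fst P; M = snd P; C = col v j in
       (\<exists>t. (\<forall>r. 1 \<le> r \<and> r \<le> t \<longrightarrow> T r C \<and> traverses m T C (r, C))
          \<and> (\<forall>r. t < r \<and> r + C \<le> m + 1 \<longrightarrow> \<not> T r C \<and> (r, C) \<notin> M))
     \<and> (\<forall>p. T (fst p) (snd p) \<and> traverses m T C p \<and> 2 \<le> fst p
          \<longrightarrow> \<not> (\<not> T (fst p - 1) (snd p) \<and> (fst p - 1, snd p) \<notin> M))
     \<and> (\<forall>p \<in> M. \<not> traverses m T C p))"

text \<open>For a column c < C_j, h c is the topmost row of column c
  traversed by pipe j (the crossing tile, or the upper of the two bumping tiles).
  New row i of column c comes from old row i (i < h c) or i+1 (i \<ge> h c); in the
  bumping case the new tile (h c, c) is the merged unmarked bumping tile.\<close>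
definition Phi :: "nat list \<Rightarrow> mpd \<Rightarrow> nat \<Rightarrow> mpd" where
  "Phi v P j =
    (let m = length v; T = fst P; M = snd P; C = col v j;
         h = (\<lambda>c. Min {r. traverses m T C (r, c)});
         src = (\<lambda>c i. if i < h c then i else i + 1);
         merged = (\<lambda>i c. c < C \<and> i = h c \<and> \<not> T (h c) c)
     in ((\<lambda>i c. in_stair (m - 1) (i, c) \<and>
            (if c < C then \<not> merged i c \<and> T (src c i) c else T i (c + 1))),
         {(i, c). in_stair (m - 1) (i, c) \<and>
            (if c < C then \<not> merged i c \<and> (src c i, c) \<in> M else (i, c + 1) \<in> M)}))"

end

theory Submission
  imports Defs
begin

text \<open>A removable pipe has a rigid shape: it descends through the crossing tiles in rows
  \<open>1..t\<close> of its column \<open>C\<close> and then runs leftwards, entering each column \<open>c < C\<close> from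
  the right at a row \<open>E c\<close>; condition (ii) forces every bumping tile it enters there to sit
  on another unmarked bumping tile. So in each column \<open>c < C\<close>, \<open>Phi\<close> just deletes row
  \<open>E c\<close> (merging the bumping pair, if any), and columns right of \<open>C\<close> shift left.

  Distinct pipes never occupy the same state, so a second removable pipe \<open>K\<close> enters each
  common column at another row \<open>F c\<close>. Following pipe \<open>K\<close> through \<open>Phi\<close> explicitly shows
  that it is again removable, and that in every column both composites delete the same two
  rows, only in opposite order.\<close>

section \<open>Removing a pipe from a single column\<close>

definition skip_row :: "nat \<Rightarrow> nat \<Rightarrow> nat" where
  "skip_row e i = (if i < e then i else i + 1)"

text \<open>A column of a layer (tiles or marks) after a pipe is removed from it at row \<open>e\<close>:
  if \<open>x\<close> (a crossing tile) row \<open>e\<close> is deleted, otherwise the bumping tiles \<open>e\<close> and \<open>e + 1\<close>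
  merge into one unmarked bumping tile.\<close>

definition drop_row :: "nat \<Rightarrow> bool \<Rightarrow> (nat \<Rightarrow> bool) \<Rightarrow> nat \<Rightarrow> bool" where
  "drop_row e x g i \<longleftrightarrow> \<not> (i = e \<and> \<not> x) \<and> g (skip_row e i)"

lemma skip_row_bounds: "i \<le> skip_row e i" "skip_row e i \<le> i + 1"
  by (simp_all add: skip_row_def)

lemma drop_row_cong:
  assumes "\<And>r. i \<le> r \<Longrightarrow> r \<le> i + 1 \<Longrightarrow> g r = g' r"
  shows "drop_row e x g i = drop_row e x g' i"
  using assms skip_row_bounds[where e = e and i = i] by (simp add: drop_row_def)

text \<open>Here \<open>t\<close> is the tile column, and \<open>g\<close> may be any layer that is blank on the bumping
  pairs of both pipes.\<close>

lemma drop_row_commute_less: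
  fixes t g :: "nat \<Rightarrow> bool"
  assumes "a < b"
    and "\<not> t a \<Longrightarrow> \<not> t (a + 1) \<and> \<not> g a \<and> \<not> g (a + 1)"
    and "\<not> t b \<Longrightarrow> \<not> t (b + 1) \<and> \<not> g b \<and> \<not> g (b + 1)"
  shows "drop_row (b - 1) (t b) (drop_row a (t a) g) i = drop_row a (t a) (drop_row b (t b) g) i"
proof -
  obtain b' where b: "b = Suc b'" using assms(1) by (cases b) auto
  have "a \<le> b'" using assms(1) b by simp
  then show ?thesis
    using assms(2,3) unfolding drop_row_def skip_row_def b
    by (cases "i < a"; cases "i = a"; cases "i < b'"; cases "i = b'"; cases "a = b'";
        cases "t a"; cases "t (Suc b')") simp_all
qed

lemma drop_row_commute:
  fixes t g :: "nat \<Rightarrow> bool"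
  assumes "a \<noteq> b"
    and "\<not> t a \<Longrightarrow> \<not> t (a + 1) \<and> \<not> g a \<and> \<not> g (a + 1)"
    and "\<not> t b \<Longrightarrow> \<not> t (b + 1) \<and> \<not> g b \<and> \<not> g (b + 1)"
  shows "drop_row (if a < b then b - 1 else b) (t b) (drop_row a (t a) g)
       = drop_row (if b < a then a - 1 else a) (t a) (drop_row b (t b) g)"
  using assms drop_row_commute_less[of a b t g] drop_row_commute_less[of b a t g]
  by (cases "a < b") (auto simp: fun_eq_iff)

section \<open>Paths of pipes\<close>

lemma pipe_state_0 [simp]: "pipe_state T k 0 = ((1, k), FromTop)"
  by (simp add: pipe_state_def)

lemma pipe_state_Suc: "pipe_state T k (Suc n) = step T (pipe_state T k n)"
  by (simp add: pipe_state_def)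

declare step.simps [simp del]

lemma step_left_boundary [simp]: "step T ((r, 0), d) = ((r, 0), d)"
  by (simp add: step.simps)

lemma step_from_top:
  "1 \<le> c \<Longrightarrow>
    step T ((r, c), FromTop) = (if T r c then ((r + 1, c), FromTop) else ((r, c - 1), FromRight))"
  by (simp add: step.simps)

lemma step_from_right:
  "1 \<le> c \<Longrightarrow>
    step T ((r, c), FromRight) = (if T r c then ((r, c - 1), FromRight) else ((r + 1, c), FromTop))"
  by (simp add: step.simps)

text \<open>The row at which a pipe that leaves column \<open>C\<close> leftwards from row \<open>t + 1\<close> enters
  column \<open>c < C\<close> from the right.\<close>

function path_row :: "tiles \<Rightarrow> nat \<Rightarrow> nat \<Rightarrow> nat \<Rightarrow> nat" where
  "path_row T C t c = (if C \<le> c + 1 then t + 1 else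
     (let r = path_row T C t (c + 1) in if T r (c + 1) then r else r + 1))"
  by auto
termination by (relation "measure (\<lambda>(T, C, t, c). C - c)") auto

declare path_row.simps [simp del]

lemma path_row_last: "C \<le> c + 1 \<Longrightarrow> path_row T C t c = t + 1"
  by (simp add: path_row.simps)

lemma path_row_step:
  "c + 1 < C \<Longrightarrow> path_row T C t c =
     (if T (path_row T C t (c + 1)) (c + 1) then path_row T C t (c + 1)
      else path_row T C t (c + 1) + 1)"
  by (subst path_row.simps) (simp add: Let_def)

lemma path_row_bound: "c < C \<Longrightarrow> path_row T C t c + c \<le> t + C"
proof (induction "C - c" arbitrary: c)
  case 0
  then show ?case by simp
next
  case (Suc x)
  show ?case
  proof (cases "C \<le> c + 1")
    case True
    then show ?thesis using Suc by (simp add: path_row_last)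
  next
    case False
    then have "path_row T C t (c + 1) + (c + 1) \<le> t + C"
      using Suc.hyps(1)[of "c + 1"] Suc.hyps(2) by simp
    moreover have "path_row T C t c \<le> path_row T C t (c + 1) + 1"
      using False by (simp add: path_row_step)
    ultimately show ?thesis by linarith
  qed
qed

lemma path_row_ge1: "1 \<le> path_row T C t c"
proof (induction "C - c" arbitrary: c)
  case 0
  then show ?case by (simp add: path_row_last)
next
  case (Suc x)
  then show ?case by (cases "C \<le> c + 1") (simp_all add: path_row_last path_row_step)
qed

definition straight_down :: "tiles \<Rightarrow> nat \<Rightarrow> nat \<Rightarrow> bool" where
  "straight_down T C t \<longleftrightarrow> (\<forall>r. 1 \<le> r \<and> r \<le> t \<longrightarrow> T r C) \<and> \<not> T (t + 1) C"

definition bump_paired :: "tiles \<Rightarrow> nat \<Rightarrow> nat \<Rightarrow> nat \<Rightarrow> bool" where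
  "bump_paired T C t c \<longleftrightarrow> (\<not> T (path_row T C t c) c \<longrightarrow> \<not> T (path_row T C t c + 1) c)"

definition paired_bumps :: "tiles \<Rightarrow> nat \<Rightarrow> nat \<Rightarrow> bool" where
  "paired_bumps T C t \<longleftrightarrow> (\<forall>c. 1 \<le> c \<and> c < C \<longrightarrow> bump_paired T C t c)"

lemma pipe_state_straight_down:
  "straight_down T C t \<Longrightarrow> 1 \<le> C \<Longrightarrow> n \<le> t \<Longrightarrow> pipe_state T C n = ((n + 1, C), FromTop)"
  by (induction n) (auto simp: pipe_state_Suc step_from_top straight_down_def)

lemma pipe_state_path_row:
  assumes "straight_down T C t" "1 \<le> C" "\<forall>c'. c < c' \<and> c' < C \<longrightarrow> bump_paired T C t c'" "c < C"
  shows "pipe_state T C (path_row T C t c + C - c - 1) = ((path_row T C t c, c), FromRight)"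
  using assms(3,4)
proof (induction "C - c" arbitrary: c)
  case 0
  then show ?case by simp
next
  case (Suc x)
  show ?case
  proof (cases "C \<le> c + 1")
    case True
    then have c: "c = C - 1" using Suc by simp
    have "pipe_state T C (t + 1) = step T ((t + 1, C), FromTop)"
      using pipe_state_straight_down[OF assms(1,2), of t] by (simp add: pipe_state_Suc)
    also have "\<dots> = ((t + 1, C - 1), FromRight)"
      using assms(1,2) by (simp add: step_from_top straight_down_def)
    finally show ?thesis using True c assms(2) by (simp add: path_row_last)
  next
    case False
    let ?r = "path_row T C t (c + 1)"
    have IH: "pipe_state T C (?r + C - (c + 1) - 1) = ((?r, c + 1), FromRight)"
      using Suc False by auto
    have paired: "bump_paired T C t (c + 1)" using Suc False by auto
    have r1: "1 \<le> ?r" by (rule path_row_ge1)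
    show ?thesis
    proof (cases "T ?r (c + 1)")
      case True
      have "pipe_state T C (?r + C - (c + 1) - 1 + 1) = ((?r, c), FromRight)"
        using IH True by (simp add: pipe_state_Suc step_from_right)
      moreover have "?r + C - (c + 1) - 1 + 1 = path_row T C t c + C - c - 1"
        using True False r1 by (simp add: path_row_step)
      ultimately show ?thesis using True False by (simp add: path_row_step)
    next
      case bump: False
      have "pipe_state T C (?r + C - (c + 1) - 1 + 1 + 1) = ((?r + 1, c), FromRight)"
        using IH bump paired by (simp add: pipe_state_Suc step_from_right step_from_top bump_paired_def)
      moreover have "?r + C - (c + 1) - 1 + 1 + 1 = path_row T C t c + C - c - 1"
        using bump False r1 by (simp add: path_row_step)
      ultimately show ?thesis using bump False by (simp add: path_row_step)
    qed
  qed
qed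

lemma pipe_state_below_path_row:
  assumes "straight_down T C t" "1 \<le> C" "\<forall>c'. c < c' \<and> c' < C \<longrightarrow> bump_paired T C t c'" "c < C"
    "1 \<le> c" "\<not> T (path_row T C t c) c"
  shows "pipe_state T C (path_row T C t c + C - c) = ((path_row T C t c + 1, c), FromTop)"
proof -
  have "path_row T C t c + C - c = Suc (path_row T C t c + C - c - 1)"
    using assms(4) path_row_ge1[of T C t c] by simp
  then show ?thesis
    using pipe_state_path_row[OF assms(1-4)] assms(5,6) by (simp add: pipe_state_Suc step_from_right)
qed

definition path_states :: "tiles \<Rightarrow> nat \<Rightarrow> nat \<Rightarrow> ((nat \<times> nat) \<times> dir) set" where
  "path_states T C t = {s. (\<exists>r. s = ((r, C), FromTop) \<and> 1 \<le> r \<and> r \<le> t + 1)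
     \<or> (\<exists>c. c < C \<and> s = ((path_row T C t c, c), FromRight))
     \<or> (\<exists>c. 1 \<le> c \<and> c < C \<and> \<not> T (path_row T C t c) c \<and> s = ((path_row T C t c + 1, c), FromTop))}"

lemma step_path_states:
  assumes "straight_down T C t" "paired_bumps T C t" "1 \<le> C" "s \<in> path_states T C t"
  shows "step T s \<in> path_states T C t"
proof -
  from assms(4) consider (down) r where "s = ((r, C), FromTop)" "1 \<le> r" "r \<le> t + 1"
    | (left) c where "c < C" "s = ((path_row T C t c, c), FromRight)"
    | (bump) c where "1 \<le> c" "c < C" "\<not> T (path_row T C t c) c"
        "s = ((path_row T C t c + 1, c), FromTop)"
    unfolding path_states_def by blast
  then show ?thesis
  proof cases
    case down
    show ?thesis
    proof (cases "r \<le> t")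
      case True
      then have "T r C" using assms(1) down by (simp add: straight_down_def)
      then show ?thesis using down True assms(3) by (simp add: step_from_top path_states_def)
    next
      case False
      then have "r = t + 1" using down by simp
      moreover have "\<not> T (t + 1) C" using assms(1) by (simp add: straight_down_def)
      ultimately have "step T s = ((path_row T C t (C - 1), C - 1), FromRight)"
        using down assms(3) by (simp add: step_from_top path_row_last)
      then show ?thesis using assms(3) unfolding path_states_def by auto
    qed
  next
    case left
    show ?thesis
    proof (cases "c = 0")
      case True
      then show ?thesis using left assms(4) by simp
    next
      case False
      have row: "path_row T C t (c - 1) =
          (if T (path_row T C t c) c then path_row T C t c else path_row T C t c + 1)"
        using path_row_step[of "c - 1" C T t] left False by simp
      show ?thesis
      proof (cases "T (path_row T C t c) c")
        case True
        then have "step T s = ((path_row T C t (c - 1), c - 1), FromRight)"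
          using left False row by (simp add: step_from_right)
        then show ?thesis using left unfolding path_states_def by auto
      next
        case crossing: False
        then have "step T s = ((path_row T C t c + 1, c), FromTop)"
          using left False by (simp add: step_from_right)
        then show ?thesis using left crossing False unfolding path_states_def by auto
      qed
    qed
  next
    case bump
    have row: "path_row T C t (c - 1) = path_row T C t c + 1"
      using path_row_step[of "c - 1" C T t] bump by simp
    have "\<not> T (path_row T C t c + 1) c"
      using assms(2) bump by (simp add: paired_bumps_def bump_paired_def)
    then have "step T s = ((path_row T C t (c - 1), c - 1), FromRight)"
      using bump row by (simp add: step_from_top)
    then show ?thesis using bump unfolding path_states_def by auto
  qed
qed

lemma pipe_state_in_path_states:
  assumes "straight_down T C t" "paired_bumps T C t" "1 \<le> C"
  shows "pipe_state T C n \<in> path_states T C t"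
proof (induction n)
  case 0
  then show ?case using assms(3) by (simp add: path_states_def)
next
  case (Suc n)
  then show ?case using step_path_states[OF assms] by (simp add: pipe_state_Suc)
qed

lemma visits_iff_path_states:
  assumes "straight_down T C t" "paired_bumps T C t" "1 \<le> C" "t + C \<le> m"
  shows "s \<in> visits m T C \<longleftrightarrow> s \<in> path_states T C t \<and> 1 \<le> snd (fst s)"
proof
  assume "s \<in> visits m T C"
  then show "s \<in> path_states T C t \<and> 1 \<le> snd (fst s)"
    using pipe_state_in_path_states[OF assms(1-3)] by (auto simp: visits_def)
next
  assume s: "s \<in> path_states T C t \<and> 1 \<le> snd (fst s)"
  have paired: "\<forall>c'. c < c' \<and> c' < C \<longrightarrow> bump_paired T C t c'" for c
    using assms(2) by (simp add: paired_bumps_def)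
  from s consider (down) r where "s = ((r, C), FromTop)" "1 \<le> r" "r \<le> t + 1"
    | (left) c where "c < C" "1 \<le> c" "s = ((path_row T C t c, c), FromRight)"
    | (bump) c where "1 \<le> c" "c < C" "\<not> T (path_row T C t c) c"
        "s = ((path_row T C t c + 1, c), FromTop)"
    unfolding path_states_def by auto
  then show "s \<in> visits m T C"
  proof cases
    case down
    have "pipe_state T C (r - 1) = s"
      using pipe_state_straight_down[OF assms(1,3), of "r - 1"] down by simp
    moreover have "r - 1 \<le> 2 * m" using down assms(4) by linarith
    ultimately show ?thesis using down assms(3) unfolding visits_def by force
  next
    case left
    have "pipe_state T C (path_row T C t c + C - c - 1) = s"
      using pipe_state_path_row[OF assms(1,3) paired left(1)] left by simp
    moreover have "path_row T C t c + C - c - 1 \<le> 2 * m"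
      using path_row_bound[OF left(1), of T t] assms(4) by linarith
    ultimately show ?thesis using left unfolding visits_def by force
  next
    case bump
    have "pipe_state T C (path_row T C t c + C - c) = s"
      using pipe_state_below_path_row[OF assms(1,3) paired bump(2,1,3)] bump by simp
    moreover have "path_row T C t c + C - c \<le> 2 * m"
      using path_row_bound[OF bump(2), of T t] assms(4) by linarith
    ultimately show ?thesis using bump unfolding visits_def by force
  qed
qed

lemma traverses_iff_path:
  assumes "straight_down T C t" "paired_bumps T C t" "1 \<le> C" "t + C \<le> m"
  shows "traverses m T C (r, c) \<longleftrightarrow> (c = C \<and> 1 \<le> r \<and> r \<le> t + 1)
     \<or> (1 \<le> c \<and> c < C \<and> (r = path_row T C t c \<or> (r = path_row T C t c + 1 \<and> \<not> T (path_row T C t c) c)))"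
  unfolding traverses_def visits_iff_path_states[OF assms] path_states_def using assms(3) by auto

lemma visits_from_right_iff:
  assumes "straight_down T C t" "paired_bumps T C t" "1 \<le> C" "t + C \<le> m"
  shows "((r, c), FromRight) \<in> visits m T C \<longleftrightarrow> 1 \<le> c \<and> c < C \<and> r = path_row T C t c"
  unfolding visits_iff_path_states[OF assms] path_states_def by auto

section \<open>Distinct pipes never share a state\<close>

lemma pipe_state_left_boundary:
  "snd (fst (pipe_state T k n)) = 0 \<Longrightarrow> snd (fst (pipe_state T k (n + d))) = 0"
  by (induction d) (simp_all add: pipe_state_Suc, metis prod.collapse step_left_boundary)

lemma step_inj:
  assumes "step T s1 = step T s2" "1 \<le> snd (fst s1)" "1 \<le> snd (fst s2)"
  shows "s1 = s2"
proof -
  obtain r1 c1 d1 r2 c2 d2 where s: "s1 = ((r1, c1), d1)" "s2 = ((r2, c2), d2)"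
    by (metis prod.collapse)
  have "c1 - 1 = c2 - 1 \<longleftrightarrow> c1 = c2" using assms(2,3) s by auto
  then show ?thesis using assms unfolding s
    by (cases d1; cases d2; auto simp: step_from_top step_from_right split: if_splits)
qed

lemma pipe_state_row_ge1: "1 \<le> fst (fst (pipe_state T k n))"
proof (induction n)
  case 0
  then show ?case by simp
next
  case (Suc n)
  obtain r c d where s: "pipe_state T k n = ((r, c), d)" by (metis prod.collapse)
  show ?case
    using Suc s by (cases "c = 0"; cases d) (auto simp: pipe_state_Suc step_from_top step_from_right)
qed

lemma pipe_state_from_top_row_ge2:
  assumes "pipe_state T k (Suc n) = ((r, c), FromTop)" "1 \<le> c"
  shows "2 \<le> r"
proof -
  obtain r1 c1 d1 where s: "pipe_state T k n = ((r1, c1), d1)" by (metis prod.collapse)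
  have "1 \<le> c1" using assms s by (cases "c1 = 0") (auto simp: pipe_state_Suc)
  moreover have "1 \<le> r1" using pipe_state_row_ge1[of T k n] s by simp
  ultimately show ?thesis
    using assms s
      by (cases d1) (auto simp: pipe_state_Suc step_from_top step_from_right split: if_splits)
qed

lemma pipe_state_eq_imp_same_pipe:
  "pipe_state T k n = pipe_state T k' n' \<Longrightarrow> 1 \<le> snd (fst (pipe_state T k n)) \<Longrightarrow> k = k'"
proof (induction n arbitrary: n')
  case 0
  show ?case
  proof (cases n')
    case 0
    then show ?thesis using "0.prems" by simp
  next
    case (Suc n'')
    then have "pipe_state T k' (Suc n'') = ((1, k), FromTop)" using "0.prems" by simp
    moreover have "1 \<le> k" using "0.prems" by (metis fst_conv pipe_state_0 snd_conv)
    ultimately show ?thesis using pipe_state_from_top_row_ge2[of T k' n'' 1 k] by simp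
  qed
next
  case (Suc n)
  show ?case
  proof (cases n')
    case 0
    then show ?thesis using Suc.prems pipe_state_from_top_row_ge2[of T k n 1 k'] by simp
  next
    case (Suc n'')
    have c1: "1 \<le> snd (fst (pipe_state T k n))"
      using Suc.prems pipe_state_left_boundary[of T k n 1] by fastforce
    have c2: "1 \<le> snd (fst (pipe_state T k' n''))"
      using Suc.prems pipe_state_left_boundary[of T k' n'' 1] Suc by fastforce
    have "pipe_state T k n = pipe_state T k' n''"
      using step_inj[OF _ c1 c2] Suc.prems Suc by (simp add: pipe_state_Suc)
    then show ?thesis using Suc.IH c1 by blast
  qed
qed

lemma visits_disjoint: "s \<in> visits m T k \<Longrightarrow> s \<in> visits m T k' \<Longrightarrow> k = k'"
  unfolding visits_def using pipe_state_eq_imp_same_pipe by fastforce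

section \<open>Columns of the pipes\<close>

lemma card_less_nth_sorted:
  assumes "sorted xs" "distinct xs" "i < length xs"
  shows "card {y \<in> set xs. y < xs ! i} = i"
proof -
  have "{y \<in> set xs. y < xs ! i} = set (take i xs)"
  proof (intro set_eqI iffI)
    fix y assume "y \<in> {y \<in> set xs. y < xs ! i}"
    then obtain k where k: "k < length xs" "xs ! k = y" "y < xs ! i" by (auto simp: in_set_conv_nth)
    have "k < i"
    proof (rule ccontr)
      assume "\<not> k < i"
      then have "xs ! i \<le> xs ! k" using assms(1) k(1) by (simp add: sorted_nth_mono)
      then show False using k by simp
    qed
    then show "y \<in> set (take i xs)" using k by (auto simp: in_set_conv_nth)
  next
    fix y assume "y \<in> set (take i xs)"
    then obtain k where k: "k < i" "xs ! k = y" using assms(3) by (auto simp: in_set_conv_nth)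
    have "xs ! k \<le> xs ! i" using assms(1,3) k(1) by (simp add: sorted_nth_mono)
    moreover have "xs ! k \<noteq> xs ! i" using assms(2,3) k(1) by (simp add: nth_eq_iff_index_eq)
    ultimately show "y \<in> {y \<in> set xs. y < xs ! i}" using k assms(3) by auto
  qed
  then show ?thesis using assms by (simp add: distinct_card)
qed

lemma col_eq_card_less:
  assumes "distinct v" "x \<in> set v"
  shows "col v x = card {y \<in> set v. y < x} + 1"
proof -
  obtain i where i: "i < length (sort v)" "sort v ! i = x"
    using assms(2) by (metis in_set_conv_nth set_sort)
  have d: "distinct (sort v)" using assms(1) by simp
  have "col v x = i + 1" unfolding col_def
  proof (rule the_equality)
    show "1 \<le> i + 1 \<and> i + 1 \<le> length v \<and> label v (i + 1) = x" using i by (simp add: label_def)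
  next
    fix k assume k: "1 \<le> k \<and> k \<le> length v \<and> label v k = x"
    then have "sort v ! (k - 1) = sort v ! i" "k - 1 < length (sort v)" using i by (auto simp: label_def)
    then have "k - 1 = i" using d i nth_eq_iff_index_eq by metis
    then show "k = i + 1" using k by linarith
  qed
  then show ?thesis using card_less_nth_sorted[of "sort v" i] i d by simp
qed

lemma col_bounds:
  assumes "distinct v" "x \<in> set v"
  shows "1 \<le> col v x" "col v x \<le> length v"
proof -
  have "card {y \<in> set v. y < x} < card (set v)"
    using assms(2) by (intro psubset_card_mono) auto
  then show "1 \<le> col v x" "col v x \<le> length v"
    using col_eq_card_less[OF assms] assms(1) by (auto simp: distinct_card)
qed

lemma col_strict_mono:
  assumes "distinct v" "x \<in> set v" "y \<in> set v" "x < y"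
  shows "col v x < col v y"
proof -
  have "{z \<in> set v. z < x} \<subset> {z \<in> set v. z < y}" using assms by auto
  then have "card {z \<in> set v. z < x} < card {z \<in> set v. z < y}" by (intro psubset_card_mono) auto
  then show ?thesis using col_eq_card_less assms by simp
qed

lemma col_inj:
  assumes "distinct v" "x \<in> set v" "y \<in> set v" "x \<noteq> y"
  shows "col v x \<noteq> col v y"
  using col_strict_mono[OF assms(1)] assms by (metis less_irrefl linorder_neqE_nat)

lemma col_removeAll:
  assumes "distinct v" "j \<in> set v" "x \<in> set v" "j \<noteq> x"
  shows "col (removeAll j v) x = (if col v x < col v j then col v x else col v x - 1)"
proof -
  have "{y \<in> set (removeAll j v). y < x} = {y \<in> set v. y < x} - {j}" by auto
  then have col: "col (removeAll j v) x = card ({y \<in> set v. y < x} - {j}) + 1"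
    using col_eq_card_less[of "removeAll j v" x] assms by (simp add: distinct_removeAll)
  show ?thesis
  proof (cases "j < x")
    case True
    then have "j \<in> {y \<in> set v. y < x}" using assms(2) by simp
    then have "card ({y \<in> set v. y < x} - {j}) + 1 = card {y \<in> set v. y < x}"
      using card_Suc_Diff1[of "{y \<in> set v. y < x}" j] by simp
    then show ?thesis
      using col col_eq_card_less[OF assms(1,3)] col_strict_mono[OF assms(1,2,3) True] by simp
  next
    case False
    then have "x < j" using assms(4) by simp
    then show ?thesis
      using col col_eq_card_less[OF assms(1,3)] col_strict_mono[OF assms(1,3,2)] by simp
  qed
qed

lemma length_removeAll_distinct: "distinct v \<Longrightarrow> j \<in> set v \<Longrightarrow> length (removeAll j v) = length v - 1"
  by (metis distinct_remove1_removeAll length_remove1)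

section \<open>The shape of a removable pipe\<close>

locale removable_pipe =
  fixes m :: nat and T :: tiles and M :: "(nat \<times> nat) set" and C t :: nat
  assumes pipe_dream: "pipe_dream m T"
    and C_ge1: "1 \<le> C"
    and t_C_le: "t + C \<le> m"
    and column: "T r C \<longleftrightarrow> 1 \<le> r \<and> r \<le> t"
    and paired: "paired_bumps T C t"
    and path_unmarked: "traverses m T C p \<Longrightarrow> p \<notin> M"
    and crossing_on_path: "T a b \<Longrightarrow> traverses m T C (a, b) \<Longrightarrow> 2 \<le> a \<Longrightarrow> T (a - 1) b \<or> (a - 1, b) \<in> M"
    and marks_in_stair: "p \<in> M \<Longrightarrow> in_stair m p"
    and column_unmarked: "(r, C) \<notin> M"
begin

lemma straight: "straight_down T C t"
  by (simp add: straight_down_def column)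

lemma traverses_iff:
  "traverses m T C (r, c) \<longleftrightarrow> (c = C \<and> 1 \<le> r \<and> r \<le> t + 1)
     \<or> (1 \<le> c \<and> c < C \<and> (r = path_row T C t c \<or> (r = path_row T C t c + 1 \<and> \<not> T (path_row T C t c) c)))"
  using traverses_iff_path[OF straight paired C_ge1 t_C_le] .

lemma visits_from_right: "1 \<le> c \<Longrightarrow> c < C \<Longrightarrow> ((path_row T C t c, c), FromRight) \<in> visits m T C"
  using visits_from_right_iff[OF straight paired C_ge1 t_C_le] by simp

lemma path_row_prev:
  "1 \<le> c \<Longrightarrow> c < C \<Longrightarrow> path_row T C t (c - 1) =
     (if T (path_row T C t c) c then path_row T C t c else path_row T C t c + 1)"
  using path_row_step[of "c - 1" C T t] by simp

lemma path_row_before_column: "path_row T C t (C - 1) = t + 1"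
  using C_ge1 by (simp add: path_row_last)

lemma path_row_le: "c < C \<Longrightarrow> path_row T C t c + c \<le> m"
  using path_row_bound[of c C T t] t_C_le by simp

lemma bump_below_path_row:
  "1 \<le> c \<Longrightarrow> c < C \<Longrightarrow> \<not> T (path_row T C t c) c \<Longrightarrow> \<not> T (path_row T C t c + 1) c"
  using paired unfolding paired_bumps_def bump_paired_def by blast

lemma path_row_unmarked: "1 \<le> c \<Longrightarrow> c < C \<Longrightarrow> (path_row T C t c, c) \<notin> M"
  using path_unmarked traverses_iff by blast

lemma below_path_row_unmarked:
  "1 \<le> c \<Longrightarrow> c < C \<Longrightarrow> \<not> T (path_row T C t c) c \<Longrightarrow> (path_row T C t c + 1, c) \<notin> M"
  using path_unmarked traverses_iff by blast

lemma above_crossing_path_row: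
  "1 \<le> c \<Longrightarrow> c < C \<Longrightarrow> T (path_row T C t c) c \<Longrightarrow> 2 \<le> path_row T C t c
    \<Longrightarrow> T (path_row T C t c - 1) c \<or> (path_row T C t c - 1, c) \<in> M"
  using crossing_on_path traverses_iff by blast

lemma removable:
  assumes "length v = m" "j \<in> set v" "col v j = C"
  shows "removable v (T, M) j"
proof -
  have "traverses m T C (r, C)" if "1 \<le> r" "r \<le> t" for r
    using traverses_iff that by simp
  then have "\<exists>t. (\<forall>r. 1 \<le> r \<and> r \<le> t \<longrightarrow> T r C \<and> traverses m T C (r, C))
      \<and> (\<forall>r. t < r \<and> r + C \<le> m + 1 \<longrightarrow> \<not> T r C \<and> (r, C) \<notin> M)"
    using column column_unmarked by (intro exI[of _ t]) auto
  moreover have "\<forall>p. T (fst p) (snd p) \<and> traverses m T C p \<and> 2 \<le> fst p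
      \<longrightarrow> \<not> (\<not> T (fst p - 1) (snd p) \<and> (fst p - 1, snd p) \<notin> M)"
    using crossing_on_path by fastforce
  moreover have "\<forall>p \<in> M. \<not> traverses m T C p"
    using path_unmarked by blast
  ultimately show ?thesis
    unfolding removable_def Let_def using assms by simp
qed

end

text \<open>Condition (ii) of removability forces the bumping tiles on the horizontal part of a
  pipe to come in vertical pairs: a crossing below an entry bump would sit under an unmarked
  bumping tile.\<close>

lemma paired_bumps_if_crossings_covered:
  assumes "straight_down T C t" "1 \<le> C" "t + C \<le> m"
    and "\<And>p. traverses m T C p \<Longrightarrow> p \<notin> M"
    and "\<And>a b. T a b \<Longrightarrow> traverses m T C (a, b) \<Longrightarrow> 2 \<le> a \<Longrightarrow> T (a - 1) b \<or> (a - 1, b) \<in> M"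
  shows "paired_bumps T C t"
proof -
  have "\<forall>c'. c \<le> c' \<and> c' < C \<longrightarrow> bump_paired T C t c'" if "1 \<le> c" for c
    using that
  proof (induction "C - c" arbitrary: c)
    case 0
    then show ?case by auto
  next
    case (Suc x)
    have paired: "\<forall>c'. c < c' \<and> c' < C \<longrightarrow> bump_paired T C t c'"
      using Suc.hyps(1)[of "c + 1"] Suc.hyps(2) Suc.prems by auto
    have "bump_paired T C t c" if "c < C"
    proof (rule ccontr)
      let ?r = "path_row T C t c"
      assume "\<not> bump_paired T C t c"
      then have bump: "\<not> T ?r c" and crossing: "T (?r + 1) c" by (auto simp: bump_paired_def)
      have at: "pipe_state T C (?r + C - c - 1) = ((?r, c), FromRight)"
        using pipe_state_path_row[OF assms(1,2) paired that] .
      have below: "pipe_state T C (?r + C - c) = ((?r + 1, c), FromTop)"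
        using pipe_state_below_path_row[OF assms(1,2) paired that Suc.prems bump] .
      have n: "?r + C - c \<le> 2 * m" using path_row_bound[OF that, of T t] assms(3) by linarith
      have "traverses m T C (?r, c)" unfolding traverses_def visits_def
        using at n Suc.prems by (intro exI[of _ FromRight] CollectI exI[of _ "?r + C - c - 1"]) auto
      moreover have "traverses m T C (?r + 1, c)" unfolding traverses_def visits_def
        using below n Suc.prems by (intro exI[of _ FromTop] CollectI exI[of _ "?r + C - c"]) auto
      ultimately show False
        using assms(4)[of "(?r, c)"] assms(5)[of "?r + 1" c] path_row_ge1[of T C t c] bump crossing
          by auto
    qed
    then show ?case using paired by (metis le_neq_implies_less)
  qed
  then show ?thesis unfolding paired_bumps_def by auto
qed

lemma crossing_run_bound:
  assumes "pipe_dream m T" "\<And>r. 1 \<le> r \<Longrightarrow> r \<le> t \<Longrightarrow> T r C" "1 \<le> C" "C \<le> m"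
  shows "t + C \<le> m"
proof (cases "t = 0")
  case True
  then show ?thesis using assms(4) by simp
next
  case False
  then have "T t C" using assms(2) by simp
  then have "in_stair m (t, C)" using assms(1) unfolding pipe_dream_def by blast
  moreover have "t + C \<noteq> m + 1"
  proof
    assume "t + C = m + 1"
    then have "C = m + 1 - t" "1 \<le> t \<and> t \<le> m" using False assms(3) by auto
    moreover have "\<not> T t (m + 1 - t)" using assms(1) \<open>1 \<le> t \<and> t \<le> m\<close> unfolding pipe_dream_def by blast
    ultimately show False using \<open>T t C\<close> by simp
  qed
  ultimately show ?thesis unfolding in_stair_def by simp
qed

lemma removable_imp_removable_pipe:
  assumes "distinct v" "(T, M) \<in> MRPD v" "removable v (T, M) j"
  shows "\<exists>t. removable_pipe (length v) T M (col v j) t"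
proof -
  let ?m = "length v" and ?C = "col v j"
  have pd: "pipe_dream ?m T" and marks: "\<forall>p\<in>M. in_stair ?m p"
    using assms(2) unfolding MRPD_def reduced_def by auto
  have "j \<in> set v" using assms(3) by (simp add: removable_def)
  then have C: "1 \<le> ?C" "?C \<le> ?m" using col_bounds[OF assms(1)] by auto
  obtain t where top: "\<forall>r. 1 \<le> r \<and> r \<le> t \<longrightarrow> T r ?C \<and> traverses ?m T ?C (r, ?C)"
    and bottom: "\<forall>r. t < r \<and> r + ?C \<le> ?m + 1 \<longrightarrow> \<not> T r ?C \<and> (r, ?C) \<notin> M"
    and covered: "\<forall>p. T (fst p) (snd p) \<and> traverses ?m T ?C p \<and> 2 \<le> fst p
          \<longrightarrow> \<not> (\<not> T (fst p - 1) (snd p) \<and> (fst p - 1, snd p) \<notin> M)"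
    and unmarked: "\<forall>p \<in> M. \<not> traverses ?m T ?C p"
    using assms(3) unfolding removable_def Let_def fst_conv snd_conv by (elim conjE exE) (rule that)
  have outside: "\<not> T r c" if "\<not> in_stair ?m (r, c)" for r c
    using pd that unfolding pipe_dream_def by blast
  have tC: "t + ?C \<le> ?m"
    using crossing_run_bound[OF pd _ C] top by blast
  have column: "T r ?C \<longleftrightarrow> 1 \<le> r \<and> r \<le> t" for r
  proof
    assume "T r ?C"
    then have "in_stair ?m (r, ?C)" using outside by blast
    then have "1 \<le> r" "r + ?C \<le> ?m + 1" unfolding in_stair_def by auto
    moreover have "\<not> (t < r \<and> r + ?C \<le> ?m + 1)" using bottom \<open>T r ?C\<close> by blast
    ultimately show "1 \<le> r \<and> r \<le> t" by linarith
  qed (use top in auto)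
  have column_unmarked: "(r, ?C) \<notin> M" for r
  proof
    assume "(r, ?C) \<in> M"
    then have "in_stair ?m (r, ?C)" "\<not> traverses ?m T ?C (r, ?C)" using marks unmarked by auto
    then have "1 \<le> r" "r + ?C \<le> ?m + 1" "\<not> (1 \<le> r \<and> r \<le> t)"
      using top unfolding in_stair_def by auto
    then show False using bottom \<open>(r, ?C) \<in> M\<close> by auto
  qed
  have straight: "straight_down T ?C t" unfolding straight_down_def using column by simp
  have unmarked': "\<And>p. traverses ?m T ?C p \<Longrightarrow> p \<notin> M" using unmarked by blast
  have covered': "\<And>a b. T a b \<Longrightarrow> traverses ?m T ?C (a, b) \<Longrightarrow> 2 \<le> a \<Longrightarrow> T (a - 1) b \<or> (a - 1, b) \<in> M"
    using covered by fastforce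
  have "paired_bumps T ?C t"
    using paired_bumps_if_crossings_covered[OF straight C(1) tC unmarked' covered'] .
  then have "removable_pipe ?m T M ?C t"
    using pd C(1) tC column unmarked' covered' marks column_unmarked by (intro removable_pipe.intro) auto
  then show ?thesis ..
qed

section \<open>The removal map\<close>

text \<open>\<open>Phi\<close> with the rows \<open>E c\<close> of the deleted path made explicit, acting on one layer \<open>g\<close>
  (the tiles or the marks) of a pipe dream with tiles \<open>T\<close>.\<close>

definition remove_path ::
    "nat \<Rightarrow> nat \<Rightarrow> (nat \<Rightarrow> nat) \<Rightarrow> tiles \<Rightarrow> (nat \<Rightarrow> nat \<Rightarrow> bool) \<Rightarrow> nat \<Rightarrow> nat \<Rightarrow> bool" where
  "remove_path m C E T g i c \<longleftrightarrow> in_stair (m - 1) (i, c) \<and>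
     (if c < C then drop_row (E c) (T (E c) c) (\<lambda>r. g r c) i else g i (c + 1))"

definition remove_pipe :: "nat \<Rightarrow> nat \<Rightarrow> (nat \<Rightarrow> nat) \<Rightarrow> mpd \<Rightarrow> mpd" where
  "remove_pipe m C E P = (remove_path m C E (fst P) (fst P),
     {(i, c). remove_path m C E (fst P) (\<lambda>r c. (r, c) \<in> snd P) i c})"

lemma remove_path_low:
  "in_stair (m - 1) (i, c) \<Longrightarrow> c < C \<Longrightarrow>
    remove_path m C E T g i c = drop_row (E c) (T (E c) c) (\<lambda>r. g r c) i"
  by (simp add: remove_path_def)

lemma remove_path_high:
  "in_stair (m - 1) (i, c) \<Longrightarrow> \<not> c < C \<Longrightarrow> remove_path m C E T g i c = g i (c + 1)"
  by (simp add: remove_path_def)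

lemma remove_pipe_cong:
  assumes "\<And>c. 1 \<le> c \<Longrightarrow> c < C \<Longrightarrow> E c = E' c"
  shows "remove_pipe m C E P = remove_pipe m C E' P"
proof -
  have "remove_path m C E T g = remove_path m C E' T g" for T g
    using assms by (auto simp: fun_eq_iff remove_path_def in_stair_def)
  then show ?thesis by (simp add: remove_pipe_def)
qed

lemma (in removable_pipe) Phi_eq_remove_pipe:
  assumes "length v = m" "col v j = C"
  shows "Phi v (T, M) j = remove_pipe m C (path_row T C t) (T, M)"
proof -
  have "Phi v (T, M) j = remove_pipe m C (\<lambda>c. Min {r. traverses m T C (r, c)}) (T, M)"
    using assms
    by (simp add: Phi_def remove_pipe_def remove_path_def drop_row_def skip_row_def Let_def fun_eq_iff)
  also have "\<dots> = remove_pipe m C (path_row T C t) (T, M)"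
  proof (rule remove_pipe_cong)
    fix c assume "1 \<le> c" "c < C"
    then have "{r. traverses m T C (r, c)} = {path_row T C t c} \<union>
        (if T (path_row T C t c) c then {} else {path_row T C t c + 1})"
      using traverses_iff by auto
    then show "Min {r. traverses m T C (r, c)} = path_row T C t c" by auto
  qed
  finally show ?thesis .
qed

section \<open>Two removable pipes\<close>

locale two_removable_pipes =
  p: removable_pipe m T M C t + q: removable_pipe m T M K s
  for m T M C t K s +
  assumes C_ne_K: "C \<noteq> K"
begin

abbreviation "E \<equiv> path_row T C t"
abbreviation "F \<equiv> path_row T K s"

definition "T' = remove_path m C E T T"
definition "M' = {(i, c). remove_path m C E T (\<lambda>r c. (r, c) \<in> M) i c}"

text \<open>Column, crossing run and entry rows of pipe \<open>K\<close> once pipe \<open>C\<close> is removed; the run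
  loses a row iff \<open>K < C\<close> and pipe \<open>C\<close> crosses column \<open>K\<close> within it.\<close>

definition "K' = (if K < C then K else K - 1)"
definition "s' = (if K < C \<and> E K \<le> s then s - 1 else s)"
definition "F' c = (if c < C then (if F c < E c then F c else F c - 1) else F (c + 1))"

lemma remove_pipe_first: "remove_pipe m C E (T, M) = (T', M')"
  by (simp add: remove_pipe_def T'_def M'_def)

lemma path_rows_differ:
  assumes "1 \<le> c" "c < C" "c < K"
  shows "E c \<noteq> F c"
proof
  assume "E c = F c"
  then have "((E c, c), FromRight) \<in> visits m T C \<inter> visits m T K"
    using p.visits_from_right[OF assms(1,2)] q.visits_from_right[OF assms(1,3)] by simp
  then show False using visits_disjoint C_ne_K by blast
qed

lemma path_rows_order:
  assumes "1 \<le> c" "c + 1 < C" "c + 1 < K"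
  shows "F c < E c \<longleftrightarrow> F (c + 1) < E (c + 1)"
proof -
  have "E c = (if T (E (c + 1)) (c + 1) then E (c + 1) else E (c + 1) + 1)"
    using p.path_row_prev[of "c + 1"] assms by simp
  moreover have "F c = (if T (F (c + 1)) (c + 1) then F (c + 1) else F (c + 1) + 1)"
    using q.path_row_prev[of "c + 1"] assms by simp
  moreover have "E c \<noteq> F c" "E (c + 1) \<noteq> F (c + 1)" using path_rows_differ assms by simp_all
  ultimately show ?thesis by (auto split: if_splits)
qed

lemma m_ge2: "2 \<le> m"
  using p.C_ge1 q.C_ge1 p.t_C_le q.t_C_le C_ne_K by linarith

lemma T'_iff:
  "in_stair (m - 1) (i, c) \<Longrightarrow> T' i c =
     (if c < C then \<not> (i = E c \<and> \<not> T (E c) c) \<and> T (skip_row (E c) i) c else T i (c + 1))"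
  unfolding T'_def remove_path_def drop_row_def by simp

lemma T'_outside: "\<not> in_stair (m - 1) (i, c) \<Longrightarrow> \<not> T' i c"
  unfolding T'_def remove_path_def by simp

lemma M'_iff:
  "(i, c) \<in> M' \<longleftrightarrow> in_stair (m - 1) (i, c) \<and>
     (if c < C then \<not> (i = E c \<and> \<not> T (E c) c) \<and> (skip_row (E c) i, c) \<in> M else (i, c + 1) \<in> M)"
  unfolding M'_def remove_path_def drop_row_def by simp

context
  fixes c assumes c_ge1: "1 \<le> c" and c_C: "c < C" and c_K: "c < K"
begin

lemma low_in_stair: "in_stair (m - 1) (F' c, c)" "in_stair (m - 1) (F' c + 1, c)"
  using path_rows_differ[OF c_ge1 c_C c_K] p.path_row_le[OF c_C] q.path_row_le[OF c_K]
    path_row_ge1[of T K s c] path_row_ge1[of T C t c] c_ge1 c_C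
  unfolding in_stair_def F'_def by auto

lemma low_skip_row: "skip_row (E c) (F' c) = F c"
  using path_rows_differ[OF c_ge1 c_C c_K] c_C unfolding F'_def skip_row_def by auto

lemma low_T'_F': "T' (F' c) c = T (F c) c"
proof -
  have "T' (F' c) c = (\<not> (F' c = E c \<and> \<not> T (E c) c) \<and> T (F c) c)"
    using T'_iff[OF low_in_stair(1)] c_C low_skip_row by simp
  moreover have "\<not> T (F c) c" if "F' c = E c" "\<not> T (E c) c"
  proof -
    have "F c = E c + 1"
      using that path_rows_differ[OF c_ge1 c_C c_K] c_C unfolding F'_def by (auto split: if_splits)
    then show ?thesis using p.bump_below_path_row[OF c_ge1 c_C] that by simp
  qed
  ultimately show ?thesis by blast
qed

lemma low_T'_below_F':
  assumes "\<not> T (F c) c"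
  shows "\<not> T' (F' c + 1) c"
proof (cases "F c < E c")
  case True
  show ?thesis
  proof (cases "F c + 1 = E c")
    case True
    then have "\<not> T (E c) c" using q.bump_below_path_row[OF c_ge1 c_K assms] by simp
    then show ?thesis using T'_iff[OF low_in_stair(2)] c_C True \<open>F c < E c\<close> unfolding F'_def by simp
  next
    case False
    then show ?thesis
      using T'_iff[OF low_in_stair(2)] c_C True q.bump_below_path_row[OF c_ge1 c_K assms]
      unfolding F'_def skip_row_def by simp
  qed
next
  case False
  then have "E c < F c" using path_rows_differ[OF c_ge1 c_C c_K] by simp
  then show ?thesis
    using T'_iff[OF low_in_stair(2)] c_C q.bump_below_path_row[OF c_ge1 c_K assms] path_row_ge1[of T K s c]
    unfolding F'_def skip_row_def by simp
qed

lemma low_F'_unmarked: "(F' c, c) \<notin> M'"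
  using M'_iff low_skip_row q.path_row_unmarked[OF c_ge1 c_K] c_C by simp

lemma low_below_F'_unmarked:
  assumes "\<not> T (F c) c"
  shows "(F' c + 1, c) \<notin> M'"
proof (cases "F c < E c")
  case True
  show ?thesis
  proof (cases "F c + 1 = E c")
    case True
    then have "\<not> T (E c) c" using q.bump_below_path_row[OF c_ge1 c_K assms] by simp
    then show ?thesis using M'_iff c_C True \<open>F c < E c\<close> unfolding F'_def by simp
  next
    case False
    then show ?thesis
      using M'_iff c_C True q.below_path_row_unmarked[OF c_ge1 c_K assms] unfolding F'_def skip_row_def
        by simp
  qed
next
  case False
  then have "E c < F c" using path_rows_differ[OF c_ge1 c_C c_K] by simp
  then show ?thesis
    using M'_iff c_C q.below_path_row_unmarked[OF c_ge1 c_K assms] path_row_ge1[of T K s c]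
    unfolding F'_def skip_row_def by simp
qed

end

context
  fixes c assumes c_ge1: "1 \<le> c" and C_c: "C \<le> c" and c_K: "c + 1 < K"
begin

lemma high_F': "F' c = F (c + 1)"
  using C_c unfolding F'_def by simp

lemma high_in_stair: "in_stair (m - 1) (F (c + 1), c)" "in_stair (m - 1) (F (c + 1) + 1, c)"
  using q.path_row_le[OF c_K] path_row_ge1[of T K s "c + 1"] c_ge1 c_K unfolding in_stair_def by auto

lemma high_T'_F': "T' (F' c) c = T (F (c + 1)) (c + 1)"
  using T'_iff[OF high_in_stair(1)] C_c high_F' by simp

lemma high_T'_below_F': "T' (F' c + 1) c = T (F (c + 1) + 1) (c + 1)"
  using T'_iff[OF high_in_stair(2)] C_c high_F' by simp

lemma high_M'_F': "(F' c, c) \<in> M' \<longleftrightarrow> (F (c + 1), c + 1) \<in> M"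
  using M'_iff high_in_stair C_c high_F' by simp

lemma high_M'_below_F': "(F' c + 1, c) \<in> M' \<longleftrightarrow> (F (c + 1) + 1, c + 1) \<in> M"
  using M'_iff high_in_stair C_c high_F' by simp

end

lemma K'_ge1: "1 \<le> K'"
  using q.C_ge1 p.C_ge1 C_ne_K unfolding K'_def by auto

lemma K'_le: "K' \<le> K"
  unfolding K'_def by auto

lemma s'_K'_le: "s' + K' \<le> m - 1"
proof (cases "K < C")
  case True
  have "E K + K \<le> m" using p.path_row_le True by simp
  then show ?thesis using True q.t_C_le path_row_ge1[of T C t K] unfolding s'_def K'_def by auto
next
  case False
  then show ?thesis using q.t_C_le q.C_ge1 unfolding s'_def K'_def by auto
qed

lemma column_K': "T' r K' \<longleftrightarrow> 1 \<le> r \<and> r \<le> s'"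
proof (cases "K < C")
  case False
  then have KC: "C < K" using C_ne_K by simp
  have "T' r (K - 1) \<longleftrightarrow> 1 \<le> r \<and> r \<le> s"
  proof (cases "in_stair (m - 1) (r, K - 1)")
    case True
    have "\<not> K - 1 < C" using KC by simp
    then show ?thesis using T'_iff[OF True] KC q.column q.C_ge1 by simp
  next
    case False
    then show ?thesis
      using T'_outside[OF False] q.t_C_le q.C_ge1 KC p.C_ge1 unfolding in_stair_def by auto
  qed
  then show ?thesis using False unfolding K'_def s'_def by simp
next
  case True
  have "E K + K \<le> m" "1 \<le> E K" using p.path_row_le True path_row_ge1 by simp_all
  show ?thesis
  proof (cases "in_stair (m - 1) (r, K)")
    case st: True
    have "T' r K = (\<not> (r = E K \<and> \<not> T (E K) K) \<and> T (skip_row (E K) r) K)"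
      using T'_iff[OF st] True by simp
    then show ?thesis
      using True q.column[of "E K"] q.column[of "skip_row (E K) r"] st \<open>1 \<le> E K\<close>
      unfolding K'_def s'_def skip_row_def in_stair_def by (auto split: if_splits)
  next
    case st: False
    then show ?thesis
      using T'_outside[OF st] True \<open>E K + K \<le> m\<close> \<open>1 \<le> E K\<close> q.t_C_le q.C_ge1
      unfolding K'_def s'_def in_stair_def by auto
  qed
qed

lemma straight_K': "straight_down T' K' s'"
  unfolding straight_down_def using column_K' by simp

lemma F'_below_C:
  assumes "C < K" "C - 1 \<le> c" "c + 1 < K"
  shows "F' c = F (c + 1)"
proof (cases "c < C")
  case True
  then have c: "c = C - 1" using assms by simp
  have "F c = (if T (F C) C then F C else F C + 1)"
    using q.path_row_prev[of C] p.C_ge1 assms(1) c by simp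
  then show ?thesis
    using p.path_row_before_column p.column[of "F C"] path_row_ge1[of T K s C] True c
    unfolding F'_def by auto
next
  case False
  then show ?thesis unfolding F'_def by simp
qed

lemma F'_before_K':
  assumes "1 < K'"
  shows "F' (K' - 1) = s' + 1"
proof (cases "K < C")
  case KC: True
  then have c: "K' - 1 = K - 1" "K - 1 < C" using q.C_ge1 unfolding K'_def by auto
  have "E (K - 1) = (if T (E K) K then E K else E K + 1)" using p.path_row_prev[of K] KC q.C_ge1 by simp
  moreover have "F (K - 1) = s + 1" using q.path_row_before_column by simp
  moreover have "E (K - 1) \<noteq> F (K - 1)"
    using path_rows_differ[of "K - 1"] KC assms unfolding K'_def by simp
  ultimately show ?thesis
    using KC q.column[of "E K"] path_row_ge1[of T C t K] c
    unfolding F'_def s'_def by (auto split: if_splits)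
next
  case False
  then have KC: "C < K" using C_ne_K by simp
  then have "K' - 1 = K - 2" "Suc (K - 2) = K - 1" using p.C_ge1 unfolding K'_def by auto
  moreover have "F' (K - 2) = F (K - 2 + 1)" using F'_below_C[OF KC, of "K - 2"] KC p.C_ge1 by simp
  ultimately show ?thesis using q.path_row_before_column False unfolding s'_def by simp
qed

lemma F'_prev:
  assumes "1 \<le> c" "c + 1 < K'"
  shows "F' c = (if T' (F' (c + 1)) (c + 1) then F' (c + 1) else F' (c + 1) + 1)"
proof (cases "c + 1 < C")
  case True
  have cK: "c + 1 < K" using assms K'_le by simp
  have t: "T' (F' (c + 1)) (c + 1) = T (F (c + 1)) (c + 1)" using low_T'_F'[of "c + 1"] True cK by simp
  have f: "F c = (if T (F (c + 1)) (c + 1) then F (c + 1) else F (c + 1) + 1)"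
    using q.path_row_prev[of "c + 1"] cK by simp
  have "F c < E c \<longleftrightarrow> F (c + 1) < E (c + 1)" using path_rows_order[of c] assms True cK by simp
  moreover have "E c \<noteq> F c" "E (c + 1) \<noteq> F (c + 1)"
    using path_rows_differ[of c] path_rows_differ[of "c + 1"] assms True cK by auto
  ultimately show ?thesis
    unfolding t using f True path_row_ge1[of T K s "c + 1"] unfolding F'_def by (auto split: if_splits)
next
  case False
  then have KC: "C < K" using assms C_ne_K unfolding K'_def by (auto split: if_splits)
  then have cK: "c + 2 < K" using assms unfolding K'_def by simp
  have "T' (F' (c + 1)) (c + 1) = T (F (c + 2)) (c + 2)" using high_T'_F'[of "c + 1"] False cK by simp
  moreover have "F' (c + 1) = F (c + 2)" using high_F'[of "c + 1"] False cK by simp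
  moreover have "F' c = F (c + 1)" using F'_below_C[OF KC, of c] False cK by simp
  moreover have "F (c + 1) = (if T (F (c + 2)) (c + 2) then F (c + 2) else F (c + 2) + 1)"
    using q.path_row_prev[of "c + 2"] cK by simp
  ultimately show ?thesis by simp
qed

lemma path_row_K': "1 \<le> c \<Longrightarrow> c < K' \<Longrightarrow> path_row T' K' s' c = F' c"
proof (induction "K' - c" arbitrary: c)
  case 0
  then show ?case by simp
next
  case (Suc x)
  show ?case
  proof (cases "K' \<le> c + 1")
    case True
    then have "c = K' - 1" "1 < K'" using Suc.prems by auto
    then show ?thesis using F'_before_K' by (simp add: path_row_last)
  next
    case False
    then have "path_row T' K' s' (c + 1) = F' (c + 1)"
      using Suc.hyps(1)[of "c + 1"] Suc.hyps(2) Suc.prems by simp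
    then show ?thesis using path_row_step[of c K' T' s'] F'_prev[of c] False Suc.prems by simp
  qed
qed

lemma paired_K': "paired_bumps T' K' s'"
  unfolding paired_bumps_def bump_paired_def
proof (intro allI impI)
  fix c assume c: "1 \<le> c \<and> c < K'" and n: "\<not> T' (path_row T' K' s' c) c"
  have e: "path_row T' K' s' c = F' c" using path_row_K' c by simp
  show "\<not> T' (path_row T' K' s' c + 1) c"
  proof (cases "c < C")
    case True
    then have cK: "c < K" using c K'_le by simp
    then show ?thesis using low_T'_F'[of c] low_T'_below_F'[of c] c True n e by simp
  next
    case False
    then have KC: "C < K" using c C_ne_K unfolding K'_def by (auto split: if_splits)
    then have cK: "c + 1 < K" using c KC unfolding K'_def by auto
    then show ?thesis
      using high_T'_F'[of c] high_T'_below_F'[of c] q.bump_below_path_row[of "c + 1"] c False n e by simp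
  qed
qed

lemma traverses_K'_iff:
  "traverses (m - 1) T' K' (r, c) \<longleftrightarrow> (c = K' \<and> 1 \<le> r \<and> r \<le> s' + 1)
     \<or> (1 \<le> c \<and> c < K' \<and> (r = F' c \<or> (r = F' c + 1 \<and> \<not> T' (F' c) c)))"
  using traverses_iff_path[OF straight_K' paired_K' K'_ge1 s'_K'_le] path_row_K' by auto

lemma column_K'_unmarked: "(r, K') \<notin> M'"
proof (cases "K < C")
  case True
  then show ?thesis using M'_iff q.column_unmarked unfolding K'_def by simp
next
  case False
  then have "C < K" using C_ne_K by simp
  moreover have "\<not> K - 1 < C" using \<open>C < K\<close> by simp
  ultimately show ?thesis using M'_iff q.column_unmarked q.C_ge1 unfolding K'_def by simp
qed

lemma low_crossing_covered:
  assumes c_ge1: "1 \<le> c" and c_C: "c < C" and c_K: "c < K"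
    and crossing: "T (F c) c" and F'_ge2: "2 \<le> F' c"
  shows "T' (F' c - 1) c \<or> (F' c - 1, c) \<in> M'"
proof -
  have "in_stair (m - 1) (F' c - 1, c)"
    using low_in_stair(1)[OF c_ge1 c_C c_K] F'_ge2 unfolding in_stair_def by auto
  then have above:
    "T' (F' c - 1) c = (\<not> (F' c - 1 = E c \<and> \<not> T (E c) c) \<and> T (skip_row (E c) (F' c - 1)) c)"
    "(F' c - 1, c) \<in> M' = (\<not> (F' c - 1 = E c \<and> \<not> T (E c) c) \<and> (skip_row (E c) (F' c - 1), c) \<in> M)"
    using T'_iff M'_iff c_C by simp_all
  note covered = q.above_crossing_path_row[OF c_ge1 c_K crossing]
  show ?thesis
  proof (cases "F c < E c")
    case True
    then have "F' c = F c" unfolding F'_def using c_C by simp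
    then show ?thesis using above covered F'_ge2 True unfolding skip_row_def by auto
  next
    case False
    then have "E c < F c" using path_rows_differ[OF c_ge1 c_C c_K] by simp
    then have F': "F' c = F c - 1" unfolding F'_def using c_C by simp
    consider "E c < F c - 2" | "E c = F c - 2" | "E c = F c - 1" using \<open>E c < F c\<close> by linarith
    then show ?thesis
    proof cases
      case 1
      then have "skip_row (E c) (F' c - 1) = F c - 1" "F' c - 1 \<noteq> E c" "2 \<le> F c"
        using F'_ge2 F' unfolding skip_row_def by auto
      then show ?thesis using above covered by auto
    next
      case 2
      show ?thesis
      proof (cases "T (E c) c")
        case True
        then have "skip_row (E c) (F' c - 1) = F c - 1" "\<not> (F' c - 1 = E c \<and> \<not> T (E c) c)" "2 \<le> F c"
          using 2 F'_ge2 F' unfolding skip_row_def by auto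
        then show ?thesis using above covered by auto
      next
        case False
        have "F c - 1 = E c + 1" using 2 F'_ge2 F' by simp
        then have "\<not> T (F c - 1) c" "(F c - 1, c) \<notin> M"
          using p.bump_below_path_row[OF c_ge1 c_C False] p.below_path_row_unmarked[OF c_ge1 c_C False]
          by auto
        moreover have "2 \<le> F c" using F'_ge2 F' by simp
        ultimately show ?thesis using covered by blast
      qed
    next
      case 3
      have "T (E c) c"
      proof (rule ccontr)
        assume "\<not> T (E c) c"
        then have "\<not> T (E c + 1) c" using p.bump_below_path_row[OF c_ge1 c_C] by blast
        then show False using 3 \<open>E c < F c\<close> crossing by (simp add: Suc_diff_1)
      qed
      moreover have "2 \<le> E c" using 3 F'_ge2 F' by simp
      ultimately show ?thesis
        using above p.above_crossing_path_row[OF c_ge1 c_C] F' 3 unfolding skip_row_def by auto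
    qed
  qed
qed

lemma antidiagonal_bump: "1 \<le> r \<Longrightarrow> r \<le> m \<Longrightarrow> \<not> T r (m + 1 - r)"
  using p.pipe_dream unfolding pipe_dream_def by blast

lemma pipe_dream_T': "pipe_dream (m - 1) T'"
  unfolding pipe_dream_def
proof (intro conjI allI impI)
  fix i c assume "T' i c"
  then show "in_stair (m - 1) (i, c)" using T'_outside by blast
next
  fix i assume i: "1 \<le> i \<and> i \<le> m - 1"
  define c where "c = m - i"
  have m1: "m - 1 + 1 = m" using m_ge2 by arith
  have cc: "m - 1 + 1 - i = c" unfolding c_def m1 ..
  have ic: "i + c = m" unfolding c_def using i m_ge2 by arith
  have c1: "1 \<le> c" unfolding c_def using i m_ge2 by arith
  have st: "in_stair (m - 1) (i, c)" unfolding in_stair_def using i c1 ic m1 by simp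
  have "\<not> T' i c"
  proof (cases "c < C")
    case True
    then have "E c + c \<le> m" using p.path_row_le by blast
    then have "\<not> i < E c" using ic by linarith
    then have sr1: "skip_row (E c) i = i + 1" unfolding skip_row_def by simp
    have eq: "c = m + 1 - (i+1)" using ic by arith
    have b: "1 \<le> i + 1" "i + 1 \<le> m" using i m_ge2 by arith+
    have "\<not> T (i+1) c" unfolding eq by (rule antidiagonal_bump[OF b])
    then have "\<not> T (skip_row (E c) i) c" unfolding sr1 .
    then show ?thesis using T'_iff[OF st] True by simp
  next
    case False
    have eq: "c + 1 = m + 1 - i" using ic by arith
    have b: "1 \<le> i" "i \<le> m" using i by arith+
    have "\<not> T i (c + 1)" unfolding eq by (rule antidiagonal_bump[OF b])
    then show ?thesis using T'_iff[OF st] False by simp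
  qed
  then show "\<not> T' i (m - 1 + 1 - i)" unfolding cc .
qed

lemma path_K'_unmarked:
  assumes "traverses (m - 1) T' K' (r, c)"
  shows "(r, c) \<notin> M'"
proof (cases "c = K'")
  case True
  then show ?thesis using column_K'_unmarked by simp
next
  case False
  then have c: "1 \<le> c" "c < K'" "r = F' c \<or> (r = F' c + 1 \<and> \<not> T' (F' c) c)"
    using assms traverses_K'_iff by auto
  show ?thesis
  proof (cases "c < C")
    case True
    then have "c < K" using c K'_le by simp
    then show ?thesis
      using c low_F'_unmarked[OF c(1) True] low_below_F'_unmarked[OF c(1) True] low_T'_F'[OF c(1) True]
      by auto
  next
    case False
    then have "C < K" using c C_ne_K unfolding K'_def by (auto split: if_splits)
    then have "c + 1 < K" using c unfolding K'_def by auto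
    then show ?thesis
      using c high_M'_F'[of c] high_M'_below_F'[of c] high_T'_F'[of c] q.path_row_unmarked[of "c + 1"]
        q.below_path_row_unmarked[of "c + 1"] False by auto
  qed
qed

lemma crossing_on_path_K':
  assumes "T' r c" "traverses (m - 1) T' K' (r, c)" "2 \<le> r"
  shows "T' (r - 1) c \<or> (r - 1, c) \<in> M'"
proof (cases "c = K'")
  case True
  then show ?thesis using assms column_K'[of r] column_K'[of "r - 1"] by auto
next
  case False
  then have c: "1 \<le> c" "c < K'" "r = F' c \<or> (r = F' c + 1 \<and> \<not> T' (F' c) c)"
    using assms traverses_K'_iff by auto
  have r: "r = F' c"
  proof (rule ccontr)
    assume "r \<noteq> F' c"
    then have "r = F' c + 1" "\<not> T' (F' c) c" using c by auto
    then have "\<not> T' r c" using paired_K' c path_row_K' unfolding paired_bumps_def bump_paired_def by auto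
    then show False using assms by simp
  qed
  show ?thesis
  proof (cases "c < C")
    case True
    then have "c < K" using c K'_le by simp
    then show ?thesis using low_crossing_covered[OF c(1) True] low_T'_F'[OF c(1) True] r assms by auto
  next
    case False
    then have "C < K" using c C_ne_K unfolding K'_def by (auto split: if_splits)
    then have cK: "c + 1 < K" using c unfolding K'_def by auto
    have F': "F' c = F (c + 1)" using high_F'[of c] c False cK by simp
    have "T (F (c + 1)) (c + 1)" using high_T'_F'[of c] r assms c False cK by simp
    moreover have "2 \<le> F (c + 1)" using assms r F' by simp
    ultimately have "T (F (c + 1) - 1) (c + 1) \<or> (F (c + 1) - 1, c + 1) \<in> M"
      using q.above_crossing_path_row[of "c + 1"] cK by simp
    moreover have "in_stair (m - 1) (F (c + 1) - 1, c)"
      using high_in_stair(1)[of c] c False cK \<open>2 \<le> F (c + 1)\<close> unfolding in_stair_def by auto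
    ultimately show ?thesis using T'_iff M'_iff False r F' by simp
  qed
qed

lemma removable_pipe_K': "removable_pipe (m - 1) T' M' K' s'"
proof
  show "traverses (m - 1) T' K' p \<Longrightarrow> p \<notin> M'" for p
    using path_K'_unmarked by (cases p) blast
  show "p \<in> M' \<Longrightarrow> in_stair (m - 1) p" for p
    using M'_iff by (cases p) blast
qed (use pipe_dream_T' K'_ge1 s'_K'_le column_K' paired_K' crossing_on_path_K' column_K'_unmarked
    in auto)

lemma remove_path_twice_low:
  assumes "in_stair (m - 1 - 1) (i, c)" "c < C" "c < K"
  shows "remove_path (m - 1) K' F' T' (remove_path m C E T g) i c
       = drop_row (if E c < F c then F c - 1 else F c) (T (F c) c)
           (drop_row (E c) (T (E c) c) (\<lambda>r. g r c)) i"
proof -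
  have c1: "1 \<le> c" using assms(1) by (simp add: in_stair_def)
  have "c < K'" using assms(2,3) C_ne_K by (auto simp: K'_def)
  moreover have "F' c = (if E c < F c then F c - 1 else F c)"
    using path_rows_differ[OF c1 assms(2,3)] assms(2) unfolding F'_def by auto
  moreover have "drop_row e x (\<lambda>r. remove_path m C E T g r c) i
      = drop_row e x (drop_row (E c) (T (E c) c) (\<lambda>r. g r c)) i" for e x
    using assms(1,2) by (intro drop_row_cong remove_path_low) (auto simp: in_stair_def)
  ultimately show ?thesis
    using remove_path_low[OF assms(1), of K'] low_T'_F'[OF c1 assms(2,3)] by simp
qed

lemma remove_path_twice_mid:
  assumes "in_stair (m - 1 - 1) (i, c)" "C \<le> c" "c + 1 < K"
  shows "remove_path (m - 1) K' F' T' (remove_path m C E T g) i c = remove_path m K F T g i (c + 1)"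
proof -
  have c1: "1 \<le> c" using assms(1) by (simp add: in_stair_def)
  have "c < K'" using assms(2,3) by (simp add: K'_def)
  moreover have
    "drop_row e x (\<lambda>r. remove_path m C E T g r c) i = drop_row e x (\<lambda>r. g r (c + 1)) i" for e x
    using assms(1,2) by (intro drop_row_cong remove_path_high) (auto simp: in_stair_def)
  moreover have "in_stair (m - 1) (i, c + 1)" using assms(1) by (auto simp: in_stair_def)
  ultimately show ?thesis
    using remove_path_low[OF assms(1), of K'] remove_path_low[of m i "c + 1" K F T g] assms(3)
      high_F'[OF c1 assms(2,3)] high_T'_F'[OF c1 assms(2,3)]
    by simp
qed

end

sublocale two_removable_pipes \<subseteq> swapped: two_removable_pipes m T M K s C t
  using C_ne_K by unfold_locales auto

context two_removable_pipes
begin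

text \<open>In a column left of both pipes the two removals delete the two entry rows of the pipes,
  in either order (\<open>drop_row_commute\<close>); further right, one of them is a mere shift.\<close>

lemma remove_path_twice_commute_less:
  assumes "C < K"
    and blank_C: "\<And>c. 1 \<le> c \<Longrightarrow> c < C \<Longrightarrow> \<not> T (E c) c \<Longrightarrow> \<not> g (E c) c \<and> \<not> g (E c + 1) c"
    and blank_K: "\<And>c. 1 \<le> c \<Longrightarrow> c < K \<Longrightarrow> \<not> T (F c) c \<Longrightarrow> \<not> g (F c) c \<and> \<not> g (F c + 1) c"
  shows "remove_path (m - 1) K' F' T' (remove_path m C E T g) i c
       = remove_path (m - 1) swapped.K' swapped.F' swapped.T' (remove_path m K F T g) i c"
proof (cases "in_stair (m - 1 - 1) (i, c)")
  case False
  then show ?thesis by (simp add: remove_path_def)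
next
  case st: True
  have K': "K' = K - 1" "swapped.K' = C" using assms(1) by (simp_all add: K'_def swapped.K'_def)
  have c1: "1 \<le> c" using st by (simp add: in_stair_def)
  consider (low) "c < C" | (mid) "C \<le> c" "c < K - 1" | (high) "K - 1 \<le> c" by linarith
  then show ?thesis
  proof cases
    case low
    then have "c < K" using assms(1) by simp
    then show ?thesis
      using remove_path_twice_low[OF st low] swapped.remove_path_twice_low[OF st _ low]
        drop_row_commute[of "E c" "F c" "\<lambda>r. T r c" "\<lambda>r. g r c"] path_rows_differ[OF c1 low]
        p.bump_below_path_row[OF c1 low] q.bump_below_path_row[OF c1] blank_C[OF c1 low] blank_K[OF c1]
      by simp
  next
    case mid
    then show ?thesis
      using remove_path_twice_mid[OF st, of g] remove_path_high[OF st, of swapped.K'] K' by simp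
  next
    case high
    have "in_stair (m - 1) (i, c + 1)" using st by (auto simp: in_stair_def)
    then show ?thesis
      using high remove_path_high[OF st, of K'] remove_path_high[OF st, of swapped.K']
        remove_path_high[of m i "c + 1" C] remove_path_high[of m i "c + 1" K] K' assms(1)
      by simp
  qed
qed

end

context two_removable_pipes
begin

lemma remove_path_twice_commute:
  assumes "\<And>c. 1 \<le> c \<Longrightarrow> c < C \<Longrightarrow> \<not> T (E c) c \<Longrightarrow> \<not> g (E c) c \<and> \<not> g (E c + 1) c"
    and "\<And>c. 1 \<le> c \<Longrightarrow> c < K \<Longrightarrow> \<not> T (F c) c \<Longrightarrow> \<not> g (F c) c \<and> \<not> g (F c + 1) c"
  shows "remove_path (m - 1) K' F' T' (remove_path m C E T g)
       = remove_path (m - 1) swapped.K' swapped.F' swapped.T' (remove_path m K F T g)"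
proof (intro ext)
  fix i c
  show "remove_path (m - 1) K' F' T' (remove_path m C E T g) i c
       = remove_path (m - 1) swapped.K' swapped.F' swapped.T' (remove_path m K F T g) i c"
  proof (cases "C < K")
    case True
    then show ?thesis using remove_path_twice_commute_less assms by blast
  next
    case False
    then have "K < C" using C_ne_K by simp
    then show ?thesis using swapped.remove_path_twice_commute_less assms by metis
  qed
qed

lemma remove_pipe_twice_commute:
  "remove_pipe (m - 1) K' F' (T', M')
     = remove_pipe (m - 1) swapped.K' swapped.F' (swapped.T', swapped.M')"
proof -
  have "remove_path (m - 1) K' F' T' (remove_path m C E T T)
      = remove_path (m - 1) swapped.K' swapped.F' swapped.T' (remove_path m K F T T)"
    by (rule remove_path_twice_commute) (use p.bump_below_path_row q.bump_below_path_row in auto)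
  moreover have "remove_path (m - 1) K' F' T' (remove_path m C E T (\<lambda>r c. (r, c) \<in> M))
      = remove_path (m - 1) swapped.K' swapped.F' swapped.T' (remove_path m K F T (\<lambda>r c. (r, c) \<in> M))"
    by (rule remove_path_twice_commute)
      (use p.path_row_unmarked p.below_path_row_unmarked q.path_row_unmarked q.below_path_row_unmarked
        in auto)
  moreover have "(\<lambda>r c. (r, c) \<in> M') = remove_path m C E T (\<lambda>r c. (r, c) \<in> M)"
    "(\<lambda>r c. (r, c) \<in> swapped.M') = remove_path m K F T (\<lambda>r c. (r, c) \<in> M)"
    by (simp_all add: M'_def swapped.M'_def)
  ultimately show ?thesis
    by (simp add: remove_pipe_def T'_def swapped.T'_def)
qed

lemma Phi_twice:
  assumes "distinct v" "length v = m" "j \<in> set v" "j' \<in> set v" "col v j = C" "col v j' = K"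
  shows "removable (removeAll j v) (Phi v (T, M) j) j'"
    and "Phi (removeAll j v) (Phi v (T, M) j) j' = remove_pipe (m - 1) K' F' (T', M')"
proof -
  have "j \<noteq> j'" using assms(5,6) C_ne_K by auto
  have length: "length (removeAll j v) = m - 1"
    using length_removeAll_distinct[OF assms(1,3)] assms(2) by simp
  have col: "col (removeAll j v) j' = K'"
    using col_removeAll[OF assms(1,3,4) \<open>j \<noteq> j'\<close>] assms(5,6) by (simp add: K'_def)
  have first: "Phi v (T, M) j = (T', M')"
    using p.Phi_eq_remove_pipe[OF assms(2,5)] remove_pipe_first by simp
  interpret second: removable_pipe "m - 1" T' M' K' s'
    by (rule removable_pipe_K')
  show "removable (removeAll j v) (Phi v (T, M) j) j'"
    unfolding first using second.removable[OF length _ col] assms(4) \<open>j \<noteq> j'\<close> by simp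
  show "Phi (removeAll j v) (Phi v (T, M) j) j' = remove_pipe (m - 1) K' F' (T', M')"
    unfolding first second.Phi_eq_remove_pipe[OF length col]
    by (rule remove_pipe_cong) (rule path_row_K')
qed

end

theorem proposition3p3:
  fixes v :: "nat list" and P :: mpd and j j' :: nat
  assumes "distinct v" and "\<forall>x \<in> set v. 0 < x"
    and "P \<in> MRPD v"
    and "removable v P j" and "removable v P j'" and "j \<noteq> j'"
  shows "removable (removeAll j v) (Phi v P j) j'
         \<and> Phi (removeAll j v) (Phi v P j) j' = Phi (removeAll j' v) (Phi v P j') j"
proof -
  obtain T M where P: "P = (T, M)" by (cases P)
  have j: "j \<in> set v" "j' \<in> set v" using assms(4,5) by (simp_all add: removable_def)
  obtain t where "removable_pipe (length v) T M (col v j) t"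
    using removable_imp_removable_pipe assms(1,3,4) P by blast
  moreover obtain s where "removable_pipe (length v) T M (col v j') s"
    using removable_imp_removable_pipe assms(1,3,5) P by blast
  moreover have "col v j \<noteq> col v j'" using col_inj assms(1,6) j by blast
  ultimately interpret two_removable_pipes "length v" T M "col v j" t "col v j'" s
    by (simp add: two_removable_pipes_def two_removable_pipes_axioms_def)
  show ?thesis
    using Phi_twice[OF assms(1) _ j] swapped.Phi_twice[OF assms(1) _ j(2,1)] remove_pipe_twice_commute P
    by simp
qed

end
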